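(* Let $(X,d,\alpha)$ be a computable metric space, let $n\ge1$, and let $S$ be a semi-computable compact set in this space. Then (i) the set $\{l\in\mathbb N: \mathcal H_l \text{ covers } S\}$ is computably enumerable; (ii) the set $\{l\in\mathbb N:\text{the lower boundary of }\mathcal H_l\text{ covers }S\}$ is computably enumerable.
   Context: A computable metric space is a triple $(X,d,\alpha)$ where $(X,d)$ is a metric space and $\alpha=(\alpha_i)_{i\in\mathbb N}$ is a sequence with dense range in $(X,d)$ such that $(i,j)\mapsto d(\alpha_i,\alpha_j)$ is a computable function $\mathbb N^2\to\mathbb R$ (a function $g:\mathbb N^k\to\mathbb R$ is computable if there is a computable $G:\mathbb N^{k+1}\to\mathbb Q$ with $|g(x)-G(x,i)|<2^{-i}$ for all $x,i$). Fix a computable $q:\mathbb N\to\mathbb Q$ whose image is the set of positive rationals and computable $\tau_1,\tau_2:\mathbb N\to\mathbb N$ with $\{(\tau_1(i),\tau_2(i)):i\in\mathbb N\}=\mathbb N^2$; let $\lambda_i=\alpha_{\tau_1(i)}$, $\rho_i=q_{\tau_2(i)}$, $I_i=B(\lambda_i,\rho_i)$ (open ball). Fix computable $\sigma:\mathbb N^2\to\mathbb N$, $\eta:\mathbb N\to\mathbb N$ such that $\{(\sigma(j,0),\dots,\sigma(j,\eta(j))):j\in\mathbb N\}$ is the set of all nonempty finite sequences in $\mathbb N$; write $(j)_i=\sigma(j,i)$, $[j]=\{(j)_i:0\le i\le\eta(j)\}$ and $J_j=\bigcup_{i\in[j]}I_i$. $S$ is semi-computable compact if $S$ is compact and $\{j:S\subseteq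 J_j\}$ is computably enumerable. Fix a computable injection $\nu:\mathbb N^n\to\mathbb N$; for $l,j_1,\dots,j_n\in\mathbb N$ write $\widehat l=\tau_2(l)$ and $(l)_{j_1,\dots,j_n}=(\tau_1(l))_{\nu(j_1,\dots,j_n)}$. Let $\mathcal H_l$ be the function $\{0,\dots,\widehat l\}^n\to\mathcal P(X)$, $(j_1,\dots,j_n)\mapsto J_{(l)_{j_1,\dots,j_n}}$. Its lower boundary is the function $\{0,\dots,\widehat l\}^{n-1}\to\mathcal P(X)$, $(j_1,\dots,j_{n-1})\mapsto J_{(l)_{j_1,\dots,j_{n-1},0}}$. A function $g:A\to\mathcal P(X)$ covers $S$ if $S\subseteq\bigcup_{a\in A}g(a)$. *)

theory Defs
  imports "HOL-Analysis.Analysis"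
begin

datatype recf = Zero | Succ | Proj nat | Comp recf "recf list" | Prim recf recf | Mu recf

inductive reval :: "recf \<Rightarrow> nat list \<Rightarrow> nat \<Rightarrow> bool" where
  reval_zero: "reval Zero xs 0"
| reval_succ: "reval Succ (x # xs) (Suc x)"
| reval_proj: "i < length xs \<Longrightarrow> reval (Proj i) xs (xs ! i)"
| reval_comp: "length ys = length gs \<Longrightarrow> (\<forall>i<length gs. reval (gs ! i) xs (ys ! i))
      \<Longrightarrow> reval f ys z \<Longrightarrow> reval (Comp f gs) xs z"
| reval_prim0: "reval f xs z \<Longrightarrow> reval (Prim f g) (0 # xs) z"
| reval_primS: "reval (Prim f g) (m # xs) y \<Longrightarrow> reval g (m # y # xs) z
      \<Longrightarrow> reval (Prim f g) (Suc m # xs) z"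
| reval_mu: "reval f (m # xs) 0 \<Longrightarrow> (\<forall>k<m. \<exists>y. 0 < y \<and> reval f (k # xs) y)
      \<Longrightarrow> reval (Mu f) xs m"

definition comp_fn :: "nat \<Rightarrow> (nat list \<Rightarrow> nat) \<Rightarrow> bool" where
  "comp_fn k f \<longleftrightarrow> (\<exists>r. \<forall>xs. length xs = k \<longrightarrow> reval r xs (f xs))"

definition comp_rat :: "nat \<Rightarrow> (nat list \<Rightarrow> rat) \<Rightarrow> bool" where
  "comp_rat k F \<longleftrightarrow> (\<exists>a b c. comp_fn k a \<and> comp_fn k b \<and> comp_fn k c \<and>
      (\<forall>xs. length xs = k \<longrightarrow> F xs = (of_nat (a xs) - of_nat (b xs)) / of_nat (c xs + 1)))"

definition comp_real :: "nat \<Rightarrow> (nat list \<Rightarrow> real) \<Rightarrow> bool" where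
  "comp_real k g \<longleftrightarrow> (\<exists>G. comp_rat (Suc k) G \<and>
      (\<forall>xs i. length xs = k \<longrightarrow> \<bar>g xs - real_of_rat (G (xs @ [i]))\<bar> < (1/2) ^ i))"

definition ce :: "nat set \<Rightarrow> bool" where
  "ce A \<longleftrightarrow> (\<exists>r. A = {x. \<exists>y. reval r [x] y})"

definition comp_metric_space :: "(nat \<Rightarrow> 'a::metric_space) \<Rightarrow> bool" where
  "comp_metric_space \<alpha> \<longleftrightarrow> closure (range \<alpha>) = UNIV \<and>
      comp_real 2 (\<lambda>xs. dist (\<alpha> (xs ! 0)) (\<alpha> (xs ! 1)))"

definition I_ball :: "(nat \<Rightarrow> 'a::metric_space) \<Rightarrow> (nat \<Rightarrow> rat) \<Rightarrow> (nat \<Rightarrow> nat) \<Rightarrow> (nat \<Rightarrow> nat)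
    \<Rightarrow> nat \<Rightarrow> 'a set" where
  "I_ball \<alpha> q \<tau>1 \<tau>2 i = ball (\<alpha> (\<tau>1 i)) (real_of_rat (q (\<tau>2 i)))"

definition code_set :: "(nat \<Rightarrow> nat \<Rightarrow> nat) \<Rightarrow> (nat \<Rightarrow> nat) \<Rightarrow> nat \<Rightarrow> nat set" where
  "code_set \<sigma> \<eta> j = {\<sigma> j i | i. i \<le> \<eta> j}"

definition J_set :: "(nat \<Rightarrow> 'a::metric_space) \<Rightarrow> (nat \<Rightarrow> rat) \<Rightarrow> (nat \<Rightarrow> nat) \<Rightarrow> (nat \<Rightarrow> nat)
    \<Rightarrow> (nat \<Rightarrow> nat \<Rightarrow> nat) \<Rightarrow> (nat \<Rightarrow> nat) \<Rightarrow> nat \<Rightarrow> 'a set" where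
  "J_set \<alpha> q \<tau>1 \<tau>2 \<sigma> \<eta> j = (\<Union>i\<in>code_set \<sigma> \<eta> j. I_ball \<alpha> q \<tau>1 \<tau>2 i)"

definition semi_computable_compact :: "(nat \<Rightarrow> 'a::metric_space) \<Rightarrow> (nat \<Rightarrow> rat) \<Rightarrow> (nat \<Rightarrow> nat)
    \<Rightarrow> (nat \<Rightarrow> nat) \<Rightarrow> (nat \<Rightarrow> nat \<Rightarrow> nat) \<Rightarrow> (nat \<Rightarrow> nat) \<Rightarrow> 'a set \<Rightarrow> bool" where
  "semi_computable_compact \<alpha> q \<tau>1 \<tau>2 \<sigma> \<eta> S \<longleftrightarrow>
     compact S \<and> ce {j. S \<subseteq> J_set \<alpha> q \<tau>1 \<tau>2 \<sigma> \<eta> j}"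

definition covers :: "'b set \<Rightarrow> ('b \<Rightarrow> 'a set) \<Rightarrow> 'a set \<Rightarrow> bool" where
  "covers A g S \<longleftrightarrow> S \<subseteq> (\<Union>a\<in>A. g a)"

definition tuples :: "nat \<Rightarrow> nat \<Rightarrow> nat list set" where
  "tuples k m = {js. length js = k \<and> (\<forall>j\<in>set js. j \<le> m)}"

text \<open>H_l : {0..hat l}^n -> P(X), (j_1..j_n) |-> J_{(l)_{j_1..j_n}}, where
  (l)_{j_1..j_n} = (tau1 l)_{nu(j_1..j_n)} = sigma (tau1 l) (nu (j_1..j_n)).\<close>
definition H_fun :: "(nat \<Rightarrow> 'a::metric_space) \<Rightarrow> (nat \<Rightarrow> rat) \<Rightarrow> (nat \<Rightarrow> nat) \<Rightarrow> (nat \<Rightarrow> nat)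
    \<Rightarrow> (nat \<Rightarrow> nat \<Rightarrow> nat) \<Rightarrow> (nat \<Rightarrow> nat) \<Rightarrow> (nat list \<Rightarrow> nat) \<Rightarrow> nat \<Rightarrow> nat list \<Rightarrow> 'a set" where
  "H_fun \<alpha> q \<tau>1 \<tau>2 \<sigma> \<eta> \<nu> l js = J_set \<alpha> q \<tau>1 \<tau>2 \<sigma> \<eta> (\<sigma> (\<tau>1 l) (\<nu> js))"

definition H_lower :: "(nat \<Rightarrow> 'a::metric_space) \<Rightarrow> (nat \<Rightarrow> rat) \<Rightarrow> (nat \<Rightarrow> nat) \<Rightarrow> (nat \<Rightarrow> nat)
    \<Rightarrow> (nat \<Rightarrow> nat \<Rightarrow> nat) \<Rightarrow> (nat \<Rightarrow> nat) \<Rightarrow> (nat list \<Rightarrow> nat) \<Rightarrow> nat \<Rightarrow> nat list \<Rightarrow> 'a set" where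
  "H_lower \<alpha> q \<tau>1 \<tau>2 \<sigma> \<eta> \<nu> l js = J_set \<alpha> q \<tau>1 \<tau>2 \<sigma> \<eta> (\<sigma> (\<tau>1 l) (\<nu> (js @ [0])))"

end

theory Submission
  imports Defs
begin

text \<open>Write \<open>m = \<tau>2 l\<close>. For a computable index map \<open>g\<close>, the family
  \<open>js \<mapsto> J (\<sigma> (\<tau>1 l) (g js))\<close> on \<open>{0..m}\<^sup>p\<close> covers \<open>S\<close> iff \<open>S \<subseteq> J (K l)\<close>, where \<open>K l\<close>
  is a code of the finite union of the index sets \<open>[\<sigma> (\<tau>1 l) (g js)]\<close>. Reading the tuples as
  base-\<open>(m + 1)\<close> digit strings of the numbers below \<open>(m + 1)\<^sup>p\<close>, the equation \<open>[k] = \<Union> \<dots>\<close>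
  becomes a bounded-quantifier condition on \<open>(k, l)\<close>, so \<open>K\<close> is computable by unbounded search.
  The set of good \<open>l\<close> is then the preimage under \<open>K\<close> of the c.e. set \<open>{j. S \<subseteq> J j}\<close>.
  Part (i) is the case \<open>g = \<nu>\<close>, part (ii) the case \<open>g js = \<nu> (js @ [0])\<close>.\<close>

section \<open>Partial recursive functions\<close>

inductive_cases revalE_Zero: "reval Zero xs y"
inductive_cases revalE_Succ: "reval Succ xs y"
inductive_cases revalE_Proj: "reval (Proj i) xs y"
inductive_cases revalE_Comp: "reval (Comp f gs) xs y"
inductive_cases revalE_Prim: "reval (Prim f g) xs y"
inductive_cases revalE_Mu: "reval (Mu f) xs y"

lemma reval_unique: "reval r xs y \<Longrightarrow> reval r xs y' \<Longrightarrow> y = y'"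
proof (induction arbitrary: y' rule: reval.induct)
  case (reval_zero xs) show ?case using reval_zero.prems by (rule revalE_Zero) auto
next
  case (reval_succ x xs) show ?case using reval_succ.prems by (rule revalE_Succ) auto
next
  case (reval_proj i xs) show ?case using reval_proj.prems by (rule revalE_Proj) auto
next
  case (reval_comp ys gs xs f z)
  from reval_comp.prems obtain ys' where l: "length ys' = length gs"
    and a: "\<forall>i<length gs. reval (gs ! i) xs (ys' ! i)" and b: "reval f ys' y'"
    by (rule revalE_Comp) auto
  have "ys = ys'" using reval_comp.hyps(1) reval_comp.IH l a by (auto intro: nth_equalityI)
  then show ?case using reval_comp.IH b by auto
next
  case (reval_prim0 f xs z g)
  show ?case using reval_prim0.prems by (rule revalE_Prim) (use reval_prim0.IH in auto)
next
  case (reval_primS f g m xs y z)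
  from reval_primS.prems obtain y2 where "reval (Prim f g) (m # xs) y2" "reval g (m # y2 # xs) y'"
    by (rule revalE_Prim) auto
  then show ?case using reval_primS.IH by auto
next
  case (reval_mu f m xs)
  from reval_mu.prems obtain m' where "y' = m'" and zero: "reval f (m' # xs) 0"
    and pos: "\<forall>k<m'. \<exists>y. 0 < y \<and> reval f (k # xs) y"
    by (rule revalE_Mu) auto
  show ?case
  proof (rule linorder_cases[of m m'])
    assume "m < m'" then show ?thesis using pos reval_mu.IH(1) by fastforce
  next
    assume "m' < m" then show ?thesis using zero reval_mu.IH(2) by fastforce
  qed (simp add: \<open>y' = m'\<close>)
qed

lemma comp_fn_cong: "comp_fn k f \<Longrightarrow> (\<And>xs. length xs = k \<Longrightarrow> f xs = g xs) \<Longrightarrow> comp_fn k g"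
  unfolding comp_fn_def by metis

lemma comp_fn_proj: "i < k \<Longrightarrow> comp_fn k (\<lambda>xs. xs ! i)"
  unfolding comp_fn_def by (auto intro!: exI[of _ "Proj i"] reval_proj)

lemma comp_fn_Suc:
  assumes "comp_fn k f" shows "comp_fn k (\<lambda>xs. Suc (f xs))"
proof -
  obtain r where r: "\<forall>xs. length xs = k \<longrightarrow> reval r xs (f xs)"
    using assms unfolding comp_fn_def by auto
  have "reval (Comp Succ [r]) xs (Suc (f xs))" if "length xs = k" for xs
    by (rule reval_comp[where ys="[f xs]"]) (use r that in \<open>auto intro: reval_succ\<close>)
  then show ?thesis unfolding comp_fn_def by blast
qed

lemma comp_fn_const: "comp_fn k (\<lambda>_. c)"
proof (induction c)
  case 0 show ?case unfolding comp_fn_def by (blast intro: reval_zero)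
next
  case (Suc c) then show ?case by (rule comp_fn_Suc)
qed

lemma comp_fn_compose:
  assumes "comp_fn (length fs) g" and "\<forall>f\<in>set fs. comp_fn k f"
  shows "comp_fn k (\<lambda>xs. g (map (\<lambda>f. f xs) fs))"
proof -
  obtain rg where rg: "\<forall>ys. length ys = length fs \<longrightarrow> reval rg ys (g ys)"
    using assms(1) unfolding comp_fn_def by auto
  from assms(2) obtain R where R: "\<forall>f\<in>set fs. \<forall>xs. length xs = k \<longrightarrow> reval (R f) xs (f xs)"
    unfolding comp_fn_def by metis
  have "reval (Comp rg (map R fs)) xs (g (map (\<lambda>f. f xs) fs))" if "length xs = k" for xs
    by (rule reval_comp[where ys="map (\<lambda>f. f xs) fs"]) (use R rg that in auto)
  then show ?thesis unfolding comp_fn_def by blast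
qed

lemma comp_fn_rec:
  assumes f: "comp_fn k f" and g: "comp_fn (Suc (Suc k)) g"
    and h0: "\<And>xs. length xs = k \<Longrightarrow> h (0 # xs) = f xs"
    and hSuc: "\<And>m xs. length xs = k \<Longrightarrow> h (Suc m # xs) = g (m # h (m # xs) # xs)"
  shows "comp_fn (Suc k) h"
proof -
  obtain rf where rf: "\<forall>xs. length xs = k \<longrightarrow> reval rf xs (f xs)"
    using f unfolding comp_fn_def by auto
  obtain rg where rg: "\<forall>ys. length ys = Suc (Suc k) \<longrightarrow> reval rg ys (g ys)"
    using g unfolding comp_fn_def by auto
  have "reval (Prim rf rg) (m # xs) (h (m # xs))" if "length xs = k" for m xs
  proof (induction m)
    case 0 show ?case unfolding h0[OF that] by (rule reval_prim0) (use rf that in auto)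
  next
    case (Suc m) show ?case unfolding hSuc[OF that] by (rule reval_primS[OF Suc]) (use rg that in auto)
  qed
  then have "reval (Prim rf rg) xs (h xs)" if "length xs = Suc k" for xs
    using that by (cases xs) auto
  then show ?thesis unfolding comp_fn_def by blast
qed

lemma comp_fn_app1:
  "comp_fn 1 (\<lambda>ys. h (ys ! 0)) \<Longrightarrow> comp_fn k f \<Longrightarrow> comp_fn k (\<lambda>xs. h (f xs))"
  using comp_fn_compose[of "[f]" "\<lambda>ys. h (ys ! 0)" k] by simp

lemma comp_fn_app2:
  "comp_fn 2 (\<lambda>ys. h (ys ! 0) (ys ! 1)) \<Longrightarrow> comp_fn k f \<Longrightarrow> comp_fn k g
   \<Longrightarrow> comp_fn k (\<lambda>xs. h (f xs) (g xs))"
  using comp_fn_compose[of "[f, g]" "\<lambda>ys. h (ys ! 0) (ys ! 1)" k] by (simp add: numeral_2_eq_2)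

lemma comp_fn_reindex:
  assumes "comp_fn k f" and "\<forall>i<k. p i < m"
  shows "comp_fn m (\<lambda>xs. f (map (\<lambda>i. xs ! p i) [0..<k]))"
proof -
  have "comp_fn m (\<lambda>xs. f (map (\<lambda>g. g xs) (map (\<lambda>i xs. xs ! p i) [0..<k])))"
    by (rule comp_fn_compose) (use assms in \<open>auto intro: comp_fn_proj\<close>)
  then show ?thesis by (simp add: comp_def)
qed

lemma comp_fn_tl:
  assumes "comp_fn k f" shows "comp_fn (Suc k) (\<lambda>xs. f (tl xs))"
proof (rule comp_fn_cong[OF comp_fn_reindex[OF assms, where p=Suc]])
  fix xs :: "nat list" assume "length xs = Suc k"
  then show "f (map (\<lambda>i. xs ! Suc i) [0..<k]) = f (tl xs)"
    by (intro arg_cong[where f=f] nth_equalityI) (auto simp: nth_tl)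
qed simp

lemma comp_fn_drop_second:
  assumes "comp_fn (Suc k) f" shows "comp_fn (Suc (Suc k)) (\<lambda>xs. f (hd xs # tl (tl xs)))"
proof (rule comp_fn_cong[OF comp_fn_reindex[OF assms, where p="\<lambda>i. if i = 0 then 0 else Suc i"]])
  fix xs :: "nat list" assume "length xs = Suc (Suc k)"
  moreover from this have "xs \<noteq> []" by auto
  ultimately show "f (map (\<lambda>i. xs ! (if i = 0 then 0 else Suc i)) [0..<Suc k]) = f (hd xs # tl (tl xs))"
    by (intro arg_cong[where f=f] nth_equalityI) (auto simp: nth_tl nth_Cons' hd_conv_nth simp del: upt_Suc)
qed simp

lemma comp_fn_Cons:
  assumes "comp_fn (Suc k) f" and "comp_fn k b"
  shows "comp_fn k (\<lambda>xs. f (b xs # xs))"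
proof -
  have "comp_fn k (\<lambda>xs. f (map (\<lambda>g. g xs) (b # map (\<lambda>i xs. xs ! i) [0..<k])))"
    by (rule comp_fn_compose) (use assms in \<open>auto intro: comp_fn_proj\<close>)
  then show ?thesis
  proof (rule comp_fn_cong)
    fix xs :: "nat list" assume "length xs = k"
    then show "f (map (\<lambda>g. g xs) (b # map (\<lambda>i xs. xs ! i) [0..<k])) = f (b xs # xs)"
      using map_nth[of xs] by (simp add: comp_def)
  qed
qed

lemma comp_fn_snoc:
  assumes "comp_fn (Suc k) f"
  shows "comp_fn k (\<lambda>xs. f (xs @ [c]))"
proof -
  have "comp_fn k (\<lambda>xs. f (map (\<lambda>g. g xs) (map (\<lambda>i xs. xs ! i) [0..<k] @ [\<lambda>_. c])))"
    by (rule comp_fn_compose) (use assms in \<open>auto intro: comp_fn_proj comp_fn_const\<close>)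
  then show ?thesis
  proof (rule comp_fn_cong)
    fix xs :: "nat list" assume "length xs = k"
    then show "f (map (\<lambda>g. g xs) (map (\<lambda>i xs. xs ! i) [0..<k] @ [\<lambda>_. c])) = f (xs @ [c])"
      using map_nth[of xs] by (simp add: comp_def)
  qed
qed

lemma ce_vimage:
  assumes "ce C" and "comp_fn 1 (\<lambda>xs. h (xs ! 0))" shows "ce (h -` C)"
proof -
  obtain r where r: "C = {x. \<exists>y. reval r [x] y}" using assms(1) unfolding ce_def by auto
  obtain rh where "\<forall>xs. length xs = 1 \<longrightarrow> reval rh xs (h (xs ! 0))"
    using assms(2) unfolding comp_fn_def by auto
  then have rh: "reval rh [l] (h l)" for l by (metis One_nat_def length_Cons list.size(3) nth_Cons_0)
  have "(\<exists>y. reval (Comp r [rh]) [l] y) \<longleftrightarrow> h l \<in> C" for l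
  proof
    assume "\<exists>y. reval (Comp r [rh]) [l] y"
    then obtain y ys where "length ys = 1" "reval rh [l] (ys ! 0)" "reval r ys y"
      by (auto elim: revalE_Comp)
    moreover have "ys ! 0 = h l" using reval_unique rh calculation(2) by blast
    ultimately show "h l \<in> C" using r by (auto simp: length_Suc_conv)
  next
    assume "h l \<in> C"
    then obtain y where "reval r [h l] y" using r by auto
    then have "reval (Comp r [rh]) [l] y"
      by (intro reval_comp[where ys="[h l]"]) (use rh in auto)
    then show "\<exists>y. reval (Comp r [rh]) [l] y" by blast
  qed
  then show ?thesis unfolding ce_def by blast
qed

section \<open>Arithmetic and decidable predicates\<close>

text \<open>Arities are written as \<open>Suc 1\<close>, \<open>Suc (Suc 2)\<close>, \<dots> where a lemma with a \<open>Suc k\<close>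
  arity (\<open>comp_fn_rec\<close>, \<open>comp_pred_bex\<close>, \<open>comp_fn_Least\<close>) is applied: numerals do not unify
  with \<open>Suc\<close>.\<close>

lemma comp_fn_add:
  assumes "comp_fn k f" and "comp_fn k g" shows "comp_fn k (\<lambda>xs. f xs + g xs)"
proof -
  have "comp_fn (Suc 1) (\<lambda>ys. ys ! 0 + ys ! 1)"
  proof (rule comp_fn_rec)
    show "comp_fn 1 (\<lambda>ys. ys ! 0)" by (rule comp_fn_proj) simp
    show "comp_fn (Suc (Suc 1)) (\<lambda>ys. Suc (ys ! 1))" by (intro comp_fn_Suc comp_fn_proj) simp
  qed auto
  then show ?thesis using comp_fn_app2[of "(+)", OF _ assms] by (simp add: numeral_2_eq_2)
qed

lemma comp_fn_mult:
  assumes "comp_fn k f" and "comp_fn k g" shows "comp_fn k (\<lambda>xs. f xs * g xs)"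
proof -
  have "comp_fn (Suc 1) (\<lambda>ys. ys ! 0 * ys ! 1)"
  proof (rule comp_fn_rec)
    show "comp_fn 1 (\<lambda>_. 0)" by (rule comp_fn_const)
    show "comp_fn (Suc (Suc 1)) (\<lambda>ys. ys ! 2 + ys ! 1)" by (intro comp_fn_add comp_fn_proj) simp_all
  qed auto
  then show ?thesis using comp_fn_app2[of "(*)", OF _ assms] by (simp add: numeral_2_eq_2)
qed

lemma comp_fn_diff:
  assumes "comp_fn k f" and "comp_fn k g" shows "comp_fn k (\<lambda>xs. f xs - g xs)"
proof -
  have pred: "comp_fn (Suc 0) (\<lambda>ys. ys ! 0 - 1)"
  proof (rule comp_fn_rec)
    show "comp_fn 0 (\<lambda>_. 0)" by (rule comp_fn_const)
    show "comp_fn (Suc (Suc 0)) (\<lambda>ys. ys ! 0)" by (rule comp_fn_proj) simp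
  qed auto
  have "comp_fn (Suc 1) (\<lambda>ys. ys ! 1 - ys ! 0)"
  proof (rule comp_fn_rec)
    show "comp_fn 1 (\<lambda>ys. ys ! 0)" by (rule comp_fn_proj) simp
    show "comp_fn (Suc (Suc 1)) (\<lambda>ys. ys ! 1 - 1)"
      using comp_fn_app1[of "\<lambda>x. x - 1" _ "\<lambda>ys. ys ! 1"] pred comp_fn_proj[of 1 "Suc (Suc 1)"]
      by simp
  qed auto
  then show ?thesis using comp_fn_app2[of "\<lambda>x y. y - x", OF _ assms(2,1)] by (simp add: numeral_2_eq_2)
qed

lemma comp_fn_power:
  assumes "comp_fn k f" and "comp_fn k g" shows "comp_fn k (\<lambda>xs. f xs ^ g xs)"
proof -
  have "comp_fn (Suc 1) (\<lambda>ys. ys ! 1 ^ ys ! 0)"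
  proof (rule comp_fn_rec)
    show "comp_fn 1 (\<lambda>_. 1)" by (rule comp_fn_const)
    show "comp_fn (Suc (Suc 1)) (\<lambda>ys. ys ! 2 * ys ! 1)" by (intro comp_fn_mult comp_fn_proj) simp_all
  qed auto
  then show ?thesis using comp_fn_app2[of "\<lambda>x y. y ^ x", OF _ assms(2,1)] by (simp add: numeral_2_eq_2)
qed

definition comp_pred :: "nat \<Rightarrow> (nat list \<Rightarrow> bool) \<Rightarrow> bool" where
  "comp_pred k P \<longleftrightarrow> comp_fn k (\<lambda>xs. of_bool (P xs))"

lemma comp_pred_cong:
  assumes "comp_pred k P" and "\<And>xs. length xs = k \<Longrightarrow> P xs = Q xs" shows "comp_pred k Q"
  using assms(1) unfolding comp_pred_def by (rule comp_fn_cong) (simp add: assms(2))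

lemma comp_pred_eq:
  assumes "comp_fn k f" and "comp_fn k g" shows "comp_pred k (\<lambda>xs. f xs = g xs)"
proof -
  have "comp_fn k (\<lambda>xs. 1 - ((f xs - g xs) + (g xs - f xs)))"
    by (intro comp_fn_diff comp_fn_add comp_fn_const assms)
  then show ?thesis unfolding comp_pred_def by (rule comp_fn_cong) auto
qed

lemma comp_pred_less:
  assumes "comp_fn k f" and "comp_fn k g" shows "comp_pred k (\<lambda>xs. f xs < g xs)"
proof -
  have "comp_fn k (\<lambda>xs. 1 - (1 - (g xs - f xs)))"
    by (intro comp_fn_diff comp_fn_const assms)
  then show ?thesis unfolding comp_pred_def by (rule comp_fn_cong) auto
qed

lemma comp_pred_conj:
  assumes "comp_pred k P" and "comp_pred k Q" shows "comp_pred k (\<lambda>xs. P xs \<and> Q xs)"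
  using comp_fn_mult[OF assms[unfolded comp_pred_def]] unfolding comp_pred_def
  by (rule comp_fn_cong) simp

lemma comp_pred_neg: "comp_pred k P \<Longrightarrow> comp_pred k (\<lambda>xs. \<not> P xs)"
  unfolding comp_pred_def by (rule comp_fn_cong[OF comp_fn_diff[OF comp_fn_const]]) auto

lemma comp_pred_bex:
  assumes Q: "comp_pred (Suc k) Q" and b: "comp_fn k b"
    and QP: "\<And>u xs. length xs = k \<Longrightarrow> Q (u # xs) = P u xs"
  shows "comp_pred k (\<lambda>xs. \<exists>u<b xs. P u xs)"
proof -
  \<comment> \<open>primitive recursion on the bound, accumulating the disjunction \<open>1 - (1 - y) * (1 - [Q])\<close>\<close>
  have "comp_fn (Suc (Suc k)) (\<lambda>ys. 1 - (1 - ys ! 1) * (1 - of_bool (Q (hd ys # tl (tl ys)))))"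
    using Q unfolding comp_pred_def
    by (intro comp_fn_diff comp_fn_mult comp_fn_const comp_fn_proj comp_fn_drop_second) auto
  then have "comp_fn (Suc k) (\<lambda>ys. of_bool (\<exists>u<hd ys. Q (u # tl ys)))"
    by (rule comp_fn_rec[OF comp_fn_const[of k 0]]) (auto simp: less_Suc_eq)
  from comp_fn_Cons[OF this b] have "comp_pred k (\<lambda>xs. \<exists>u<b xs. Q (u # xs))"
    unfolding comp_pred_def by simp
  then show ?thesis by (rule comp_pred_cong) (simp add: QP)
qed

lemma comp_pred_ball:
  assumes "comp_pred (Suc k) Q" and "comp_fn k b"
    and "\<And>u xs. length xs = k \<Longrightarrow> Q (u # xs) = P u xs"
  shows "comp_pred k (\<lambda>xs. \<forall>u<b xs. P u xs)"
  using comp_pred_neg[OF comp_pred_bex[OF comp_pred_neg[OF assms(1)] assms(2), of "\<lambda>u xs. \<not> P u xs"]]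
    assms(3) by simp

lemma comp_fn_Least:
  assumes P: "comp_pred (Suc k) P" and ex: "\<And>xs. length xs = k \<Longrightarrow> \<exists>m. P (m # xs)"
  shows "comp_fn k (\<lambda>xs. LEAST m. P (m # xs))"
proof -
  have "comp_fn (Suc k) (\<lambda>ys. 1 - of_bool (P ys))"
    using P unfolding comp_pred_def by (intro comp_fn_diff comp_fn_const)
  then obtain r where r: "\<And>ys. length ys = Suc k \<Longrightarrow> reval r ys (1 - of_bool (P ys))"
    unfolding comp_fn_def by blast
  have "reval (Mu r) xs (LEAST m. P (m # xs))" if "length xs = k" for xs
  proof (rule reval_mu)
    have "P ((LEAST m. P (m # xs)) # xs)" using ex[OF that] by (rule LeastI_ex)
    then show "reval r ((LEAST m. P (m # xs)) # xs) 0"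
      using r[of "(LEAST m. P (m # xs)) # xs"] that by simp
    show "\<forall>j<(LEAST m. P (m # xs)). \<exists>y>0. reval r (j # xs) y"
    proof (intro allI impI)
      fix j assume "j < (LEAST m. P (m # xs))"
      then have "\<not> P (j # xs)" by (rule not_less_Least)
      then show "\<exists>y>0. reval r (j # xs) y" using r[of "j # xs"] that by auto
    qed
  qed
  then show ?thesis unfolding comp_fn_def by blast
qed

lemma Least_less_mult_Suc: "(LEAST q. x < Suc q * Suc y) = x div Suc y"
proof (rule Least_equality)
  show "x < Suc (x div Suc y) * Suc y"
    using dividend_less_times_div[of "Suc y" x] by (simp add: algebra_simps)
  show "x div Suc y \<le> q" if "x < Suc q * Suc y" for q
    using less_mult_imp_div_less[OF that] by simp
qed

lemma comp_fn_div_Suc: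
  assumes "comp_fn k f" and "comp_fn k g" shows "comp_fn k (\<lambda>xs. f xs div Suc (g xs))"
proof -
  have "comp_pred (Suc 2) (\<lambda>ys. ys ! 1 < Suc (ys ! 0) * Suc (ys ! 2))"
    by (intro comp_pred_less comp_fn_mult comp_fn_Suc comp_fn_proj) simp_all
  then have "comp_fn 2 (\<lambda>ys. LEAST q. (q # ys) ! 1 < Suc ((q # ys) ! 0) * Suc ((q # ys) ! 2))"
  proof (rule comp_fn_Least)
    fix xs :: "nat list"
    show "\<exists>m. (m # xs) ! 1 < Suc ((m # xs) ! 0) * Suc ((m # xs) ! 2)"
      by (rule exI[of _ "xs ! 0"]) simp
  qed
  then have "comp_fn 2 (\<lambda>ys. ys ! 0 div Suc (ys ! 1))"
    by (rule comp_fn_cong) (simp add: Least_less_mult_Suc del: mult_Suc mult_Suc_right)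
  then show ?thesis using comp_fn_app2[of "\<lambda>x y. x div Suc y", OF _ assms] by simp
qed

lemma comp_fn_mod_Suc:
  assumes "comp_fn k f" and "comp_fn k g" shows "comp_fn k (\<lambda>xs. f xs mod Suc (g xs))"
proof -
  have "comp_fn k (\<lambda>xs. f xs - Suc (g xs) * (f xs div Suc (g xs)))"
    by (intro comp_fn_diff comp_fn_mult comp_fn_Suc comp_fn_div_Suc assms)
  then show ?thesis by (rule comp_fn_cong) (simp only: minus_mult_div_eq_mod)
qed

section \<open>Codes of finite sets and coverings\<close>

fun digits :: "nat \<Rightarrow> nat \<Rightarrow> nat \<Rightarrow> nat list" where
  "digits 0 m t = []"
| "digits (Suc p) m t = t mod Suc m # digits p m (t div Suc m)"

lemma length_digits [simp]: "length (digits p m t) = p"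
  by (induction p arbitrary: t) auto

lemma nth_digits: "i < p \<Longrightarrow> digits p m t ! i = t div Suc m ^ i mod Suc m"
proof (induction p arbitrary: t i)
  case (Suc p)
  then show ?case by (cases i) (simp_all add: div_mult2_eq del: mult_Suc)
qed simp

lemma digits_le: "j \<in> set (digits p m t) \<Longrightarrow> j \<le> m"
  by (induction p arbitrary: t) (auto simp: less_Suc_eq_le)

lemma digits_image: "digits p m ` {..<Suc m ^ p} = tuples p m"
proof
  show "digits p m ` {..<Suc m ^ p} \<subseteq> tuples p m"
    by (auto simp: tuples_def dest: digits_le)
  show "tuples p m \<subseteq> digits p m ` {..<Suc m ^ p}"
  proof
    fix js assume "js \<in> tuples p m"
    then show "js \<in> digits p m ` {..<Suc m ^ p}"
    proof (induction p arbitrary: js)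
      case 0 then show ?case by (simp add: tuples_def)
    next
      case (Suc p)
      then obtain a js' where js: "js = a # js'" and a: "a \<le> m" and "js' \<in> tuples p m"
        by (cases js) (auto simp: tuples_def)
      with Suc.IH obtain t where t: "t < Suc m ^ p" "digits p m t = js'" by blast
      have "a + Suc m * t < Suc m ^ Suc p"
        using a mult_le_mono2[of "Suc t" "Suc m ^ p" "Suc m"] t(1) by simp
      moreover have "digits (Suc p) m (a + Suc m * t) = js"
        using a t(2) js by (simp del: mult_Suc)
      ultimately show ?case by (metis imageI lessThan_iff)
    qed
  qed
qed

lemma comp_fn_digits:
  assumes g: "comp_fn p g" and m: "comp_fn k m" and t: "comp_fn k t"
  shows "comp_fn k (\<lambda>xs. g (digits p (m xs) (t xs)))"
proof -
  \<comment> \<open>the divisor \<open>(m + 1)\<^sup>i\<close> is written as \<open>Suc ((m + 1)\<^sup>i - 1)\<close> to fit \<open>comp_fn_div_Suc\<close>\<close>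
  let ?fs = "map (\<lambda>i xs. t xs div Suc (Suc (m xs) ^ i - 1) mod Suc (m xs)) [0..<p]"
  have "\<forall>f\<in>set ?fs. comp_fn k f"
  proof
    fix f assume "f \<in> set ?fs"
    then obtain i where "f = (\<lambda>xs. t xs div Suc (Suc (m xs) ^ i - 1) mod Suc (m xs))" by auto
    then show "comp_fn k f"
      by (simp only:) (intro comp_fn_mod_Suc comp_fn_div_Suc comp_fn_diff comp_fn_power
          comp_fn_Suc comp_fn_const m t)
  qed
  with g have "comp_fn k (\<lambda>xs. g (map (\<lambda>f. f xs) ?fs))"
    by (intro comp_fn_compose) simp_all
  then show ?thesis
    by (rule comp_fn_cong) (auto intro!: arg_cong[where f=g] nth_equalityI simp: nth_digits)
qed

lemma code_set_iff: "a \<in> code_set \<sigma> \<eta> j \<longleftrightarrow> (\<exists>i<Suc (\<eta> j). \<sigma> j i = a)"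
  unfolding code_set_def by (auto simp: less_Suc_eq_le)

lemma code_set_exists:
  assumes seq_enum: "range (\<lambda>j. map (\<sigma> j) [0..<Suc (\<eta> j)]) = {xs. xs \<noteq> []}"
    and "finite A" and "A \<noteq> {}"
  shows "\<exists>k. code_set \<sigma> \<eta> k = A"
proof -
  obtain xs where xs: "set xs = A" using \<open>finite A\<close> finite_list by blast
  with \<open>A \<noteq> {}\<close> have "xs \<in> range (\<lambda>j. map (\<sigma> j) [0..<Suc (\<eta> j)])"
    unfolding seq_enum by auto
  then obtain k where "xs = map (\<sigma> k) [0..<Suc (\<eta> k)]" by blast
  then have "code_set \<sigma> \<eta> k = A"
    using xs by (auto simp: code_set_iff simp del: upt_Suc)
  then show ?thesis ..
qed

lemma code_set_subset_iff: "code_set \<sigma> \<eta> k \<subseteq> A \<longleftrightarrow> (\<forall>i<Suc (\<eta> k). \<sigma> k i \<in> A)"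
  unfolding code_set_def by (auto simp: less_Suc_eq_le)

lemma code_set_eq_UN_iff:
  "code_set \<sigma> \<eta> k = (\<Union>t<n. code_set \<sigma> \<eta> (F t)) \<longleftrightarrow>
    (\<forall>i<Suc (\<eta> k). \<exists>t<n. \<sigma> k i \<in> code_set \<sigma> \<eta> (F t)) \<and>
    (\<forall>t<n. \<forall>i<Suc (\<eta> (F t)). \<sigma> (F t) i \<in> code_set \<sigma> \<eta> k)"
  unfolding set_eq_subset UN_subset_iff code_set_subset_iff by (simp add: Ball_def Bex_def)

context
  fixes \<sigma> :: "nat \<Rightarrow> nat \<Rightarrow> nat" and \<eta> :: "nat \<Rightarrow> nat"
  assumes sigma_comp: "comp_fn 2 (\<lambda>xs. \<sigma> (xs ! 0) (xs ! 1))"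
    and eta_comp: "comp_fn 1 (\<lambda>xs. \<eta> (xs ! 0))"
begin

lemma comp_pred_mem_code_set:
  assumes a: "comp_fn k a" and j: "comp_fn k j"
  shows "comp_pred k (\<lambda>xs. a xs \<in> code_set \<sigma> \<eta> (j xs))"
proof -
  have "comp_pred (Suc k) (\<lambda>ys. \<sigma> (j (tl ys)) (ys ! 0) = a (tl ys))"
    by (intro comp_pred_eq comp_fn_app2[OF sigma_comp] comp_fn_tl comp_fn_proj a j) simp
  moreover have "comp_fn k (\<lambda>xs. Suc (\<eta> (j xs)))"
    by (intro comp_fn_Suc comp_fn_app1[OF eta_comp] j)
  ultimately have "comp_pred k (\<lambda>xs. \<exists>i<Suc (\<eta> (j xs)). \<sigma> (j xs) i = a xs)"
    by (rule comp_pred_bex) simp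
  then show ?thesis by (simp add: code_set_iff)
qed

lemma comp_pred_code_set_eq_UN:
  assumes N: "comp_fn 1 (\<lambda>xs. N (xs ! 0))" and F: "comp_fn 2 (\<lambda>xs. F (xs ! 0) (xs ! 1))"
  shows "comp_pred 2 (\<lambda>xs. code_set \<sigma> \<eta> (xs ! 0) = (\<Union>t<N (xs ! 1). code_set \<sigma> \<eta> (F (xs ! 1) t)))"
proof -
  have Nc: "comp_fn k f \<Longrightarrow> comp_fn k (\<lambda>xs. N (f xs))" for k f
    using comp_fn_app1[OF N] .
  have Fc: "comp_fn k f \<Longrightarrow> comp_fn k g \<Longrightarrow> comp_fn k (\<lambda>xs. F (f xs) (g xs))" for k f g
    using comp_fn_app2[OF F] .
  have sc: "comp_fn k f \<Longrightarrow> comp_fn k g \<Longrightarrow> comp_fn k (\<lambda>xs. \<sigma> (f xs) (g xs))" for k f g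
    using comp_fn_app2[OF sigma_comp] .
  have ec: "comp_fn k f \<Longrightarrow> comp_fn k (\<lambda>xs. Suc (\<eta> (f xs)))" for k f
    using comp_fn_Suc[OF comp_fn_app1[OF eta_comp]] .
  \<comment> \<open>each bounded quantifier conses its variable onto the argument list \<open>[k, l]\<close>\<close>
  have "comp_pred (Suc (Suc 2)) (\<lambda>zs. \<sigma> (zs ! 2) (zs ! 1) \<in> code_set \<sigma> \<eta> (F (zs ! 3) (zs ! 0)))"
    by (intro comp_pred_mem_code_set sc Fc comp_fn_proj) simp_all
  then have "comp_pred (Suc 2) (\<lambda>ys. \<exists>t<N (ys ! 2). \<sigma> (ys ! 1) (ys ! 0) \<in> code_set \<sigma> \<eta> (F (ys ! 2) t))"
    by (rule comp_pred_bex) (intro Nc comp_fn_proj, simp_all)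
  then have sub: "comp_pred 2 (\<lambda>xs. \<forall>i<Suc (\<eta> (xs ! 0)). \<exists>t<N (xs ! 1).
      \<sigma> (xs ! 0) i \<in> code_set \<sigma> \<eta> (F (xs ! 1) t))"
    by (rule comp_pred_ball) (intro ec comp_fn_proj, simp_all)
  have "comp_pred (Suc (Suc 2)) (\<lambda>zs. \<sigma> (F (zs ! 3) (zs ! 1)) (zs ! 0) \<in> code_set \<sigma> \<eta> (zs ! 2))"
    by (intro comp_pred_mem_code_set sc Fc comp_fn_proj) simp_all
  then have "comp_pred (Suc 2) (\<lambda>ys. \<forall>i<Suc (\<eta> (F (ys ! 2) (ys ! 0))).
      \<sigma> (F (ys ! 2) (ys ! 0)) i \<in> code_set \<sigma> \<eta> (ys ! 1))"
    by (rule comp_pred_ball) (intro ec Fc comp_fn_proj, simp_all)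
  then have sup: "comp_pred 2 (\<lambda>xs. \<forall>t<N (xs ! 1). \<forall>i<Suc (\<eta> (F (xs ! 1) t)).
      \<sigma> (F (xs ! 1) t) i \<in> code_set \<sigma> \<eta> (xs ! 0))"
    by (rule comp_pred_ball) (intro Nc comp_fn_proj, simp_all)
  from comp_pred_conj[OF sub sup] show ?thesis
    by (rule comp_pred_cong) (simp only: code_set_eq_UN_iff)
qed

lemma comp_fn_UN_code:
  assumes seq_enum: "range (\<lambda>j. map (\<sigma> j) [0..<Suc (\<eta> j)]) = {xs. xs \<noteq> []}"
    and N: "comp_fn 1 (\<lambda>xs. N (xs ! 0))" and N_pos: "\<And>l. 0 < N l"
    and F: "comp_fn 2 (\<lambda>xs. F (xs ! 0) (xs ! 1))"
  obtains K where "comp_fn 1 (\<lambda>xs. K (xs ! 0))"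
    and "\<And>l. code_set \<sigma> \<eta> (K l) = (\<Union>t<N l. code_set \<sigma> \<eta> (F l t))"
proof -
  let ?U = "\<lambda>l. \<Union>t<N l. code_set \<sigma> \<eta> (F l t)"
  have ex: "\<exists>k. code_set \<sigma> \<eta> k = ?U l" for l
  proof (rule code_set_exists[OF seq_enum])
    show "finite (?U l)" by (simp add: code_set_def)
    have "\<sigma> (F l 0) 0 \<in> ?U l" using N_pos[of l] by (auto simp: code_set_iff)
    then show "?U l \<noteq> {}" by blast
  qed
  have "comp_fn 1 (\<lambda>xs. (LEAST k. code_set \<sigma> \<eta> k = ?U (xs ! 0)))"
    using comp_fn_Least[OF comp_pred_code_set_eq_UN[OF N F, unfolded numeral_2_eq_2]] ex
    by (simp add: One_nat_def)
  moreover have "code_set \<sigma> \<eta> (LEAST k. code_set \<sigma> \<eta> k = ?U l) = ?U l" for l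
    using ex by (rule LeastI_ex)
  ultimately show thesis by (rule that)
qed

lemma ce_subset_UN_J_set:
  fixes \<alpha> :: "nat \<Rightarrow> 'a::metric_space"
  assumes seq_enum: "range (\<lambda>j. map (\<sigma> j) [0..<Suc (\<eta> j)]) = {xs. xs \<noteq> []}"
    and S: "ce {j. S \<subseteq> J_set \<alpha> q \<tau>1 \<tau>2 \<sigma> \<eta> j}"
    and N: "comp_fn 1 (\<lambda>xs. N (xs ! 0))" and N_pos: "\<And>l. 0 < N l"
    and F: "comp_fn 2 (\<lambda>xs. F (xs ! 0) (xs ! 1))"
  shows "ce {l. S \<subseteq> (\<Union>t<N l. J_set \<alpha> q \<tau>1 \<tau>2 \<sigma> \<eta> (F l t))}"
proof -
  obtain K where K: "comp_fn 1 (\<lambda>xs. K (xs ! 0))"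
    and K_code: "\<And>l. code_set \<sigma> \<eta> (K l) = (\<Union>t<N l. code_set \<sigma> \<eta> (F l t))"
    using comp_fn_UN_code[OF seq_enum N N_pos F] by blast
  have "J_set \<alpha> q \<tau>1 \<tau>2 \<sigma> \<eta> (K l) = (\<Union>t<N l. J_set \<alpha> q \<tau>1 \<tau>2 \<sigma> \<eta> (F l t))" for l
    unfolding J_set_def K_code by (simp only: UN_UN_flatten)
  then have "{l. S \<subseteq> (\<Union>t<N l. J_set \<alpha> q \<tau>1 \<tau>2 \<sigma> \<eta> (F l t))}
      = K -` {j. S \<subseteq> J_set \<alpha> q \<tau>1 \<tau>2 \<sigma> \<eta> j}"
    by auto
  with ce_vimage[OF S K] show ?thesis by simp
qed

lemma ce_covers_tuples:
  fixes \<alpha> :: "nat \<Rightarrow> 'a::metric_space"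
  assumes seq_enum: "range (\<lambda>j. map (\<sigma> j) [0..<Suc (\<eta> j)]) = {xs. xs \<noteq> []}"
    and S: "ce {j. S \<subseteq> J_set \<alpha> q \<tau>1 \<tau>2 \<sigma> \<eta> j}"
    and tau1_comp: "comp_fn 1 (\<lambda>xs. \<tau>1 (xs ! 0))" and tau2_comp: "comp_fn 1 (\<lambda>xs. \<tau>2 (xs ! 0))"
    and g: "comp_fn p g"
  shows "ce {l. covers (tuples p (\<tau>2 l)) (\<lambda>js. J_set \<alpha> q \<tau>1 \<tau>2 \<sigma> \<eta> (\<sigma> (\<tau>1 l) (g js))) S}"
proof -
  have N: "comp_fn 1 (\<lambda>xs. Suc (\<tau>2 (xs ! 0)) ^ p)"
    by (intro comp_fn_power comp_fn_Suc comp_fn_app1[OF tau2_comp] comp_fn_proj comp_fn_const) simp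
  have F: "comp_fn 2 (\<lambda>xs. \<sigma> (\<tau>1 (xs ! 0)) (g (digits p (\<tau>2 (xs ! 0)) (xs ! 1))))"
    by (intro comp_fn_app2[OF sigma_comp] comp_fn_app1[OF tau1_comp] comp_fn_digits[OF g]
        comp_fn_app1[OF tau2_comp] comp_fn_proj) simp_all
  have "ce {l. S \<subseteq> (\<Union>t<Suc (\<tau>2 l) ^ p.
      J_set \<alpha> q \<tau>1 \<tau>2 \<sigma> \<eta> (\<sigma> (\<tau>1 l) (g (digits p (\<tau>2 l) t))))}"
    using ce_subset_UN_J_set[OF seq_enum S N _ F] by simp
  then show ?thesis
    unfolding covers_def digits_image[symmetric] by (simp add: image_image)
qed

end

theorem proposition5p3:
  fixes \<alpha> :: "nat \<Rightarrow> 'a::metric_space"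
    and q :: "nat \<Rightarrow> rat"
    and \<tau>1 \<tau>2 \<eta> :: "nat \<Rightarrow> nat"
    and \<sigma> :: "nat \<Rightarrow> nat \<Rightarrow> nat"
    and \<nu> :: "nat list \<Rightarrow> nat"
    and n :: nat
    and S :: "'a set"
  assumes cms: "comp_metric_space \<alpha>"
    and q_comp: "comp_rat 1 (\<lambda>xs. q (xs ! 0))"
    and q_range: "range q = {r. 0 < r}"
    and tau1_comp: "comp_fn 1 (\<lambda>xs. \<tau>1 (xs ! 0))"
    and tau2_comp: "comp_fn 1 (\<lambda>xs. \<tau>2 (xs ! 0))"
    and tau_surj: "range (\<lambda>i. (\<tau>1 i, \<tau>2 i)) = UNIV"
    and sigma_comp: "comp_fn 2 (\<lambda>xs. \<sigma> (xs ! 0) (xs ! 1))"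
    and eta_comp: "comp_fn 1 (\<lambda>xs. \<eta> (xs ! 0))"
    and seq_enum: "range (\<lambda>j. map (\<sigma> j) [0..<Suc (\<eta> j)]) = {xs. xs \<noteq> []}"
    and nu_comp: "comp_fn n \<nu>"
    and nu_inj: "inj_on \<nu> {js. length js = n}"
    and n_pos: "1 \<le> n"
    and S_scc: "semi_computable_compact \<alpha> q \<tau>1 \<tau>2 \<sigma> \<eta> S"
  shows "ce {l. covers (tuples n (\<tau>2 l)) (H_fun \<alpha> q \<tau>1 \<tau>2 \<sigma> \<eta> \<nu> l) S}
       \<and> ce {l. covers (tuples (n - 1) (\<tau>2 l)) (H_lower \<alpha> q \<tau>1 \<tau>2 \<sigma> \<eta> \<nu> l) S}"
proof
  have S: "ce {j. S \<subseteq> J_set \<alpha> q \<tau>1 \<tau>2 \<sigma> \<eta> j}"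
    using S_scc unfolding semi_computable_compact_def by simp
  note ce_covers = ce_covers_tuples[OF sigma_comp eta_comp seq_enum S tau1_comp tau2_comp]
  show "ce {l. covers (tuples n (\<tau>2 l)) (H_fun \<alpha> q \<tau>1 \<tau>2 \<sigma> \<eta> \<nu> l) S}"
    unfolding H_fun_def[abs_def] by (rule ce_covers[OF nu_comp])
  have "comp_fn (n - 1) (\<lambda>js. \<nu> (js @ [0]))"
    using n_pos nu_comp by (intro comp_fn_snoc) simp
  then show "ce {l. covers (tuples (n - 1) (\<tau>2 l)) (H_lower \<alpha> q \<tau>1 \<tau>2 \<sigma> \<eta> \<nu> l) S}"
    unfolding H_lower_def[abs_def] by (rule ce_covers)
qed

end
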